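(* For all $N\in\mathbb{N}$, $$\#\{(q_1,q_2)\in(\tfrac12\mathbb{Z})^2\mid 4q_1^2+4q_2^2+q_1-q_2=N\}=\frac14\,\#\{(x,y)\in\mathbb{Z}^2\mid x^2+y^2=8N+1\}.$$
   Context: In type $C_2^{(1)}$, with coweight lattice $L=\{\sqrt2q_1\varepsilon_1+\sqrt2q_2\varepsilon_2\mid q_1,q_2\in\frac12\mathbb{Z}\}$, the quantity $4q_1^2+4q_2^2+q_1-q_2$ is the $\Lambda_1$-atomic length $\mathcal{L}_{\Lambda_1}(t_q)=\langle\Lambda_1-t_q\Lambda_1,\rho^\vee\rangle$ of $q=\sqrt2q_1\varepsilon_1+\sqrt2q_2\varepsilon_2$; so the left-hand side is $|\widehat{\mathcal{B}_1}(N)|$, the number of $q\in L$ with $\mathcal{L}_{\Lambda_1}(t_q)=N$. *)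

theory Defs
  imports Complex_Main
begin

definition half_ints :: "rat set" where
  "half_ints = {q. 2 * q \<in> \<int>}"

end

theory Submission
  imports Defs
begin

(* Writing q = (a/2, b/2), the equation becomes 2 a^2 + 2 b^2 + a - b = 2 N, and the identity
   (2 (a + b))^2 + (2 (a - b) + 1)^2 = 4 (2 a^2 + 2 b^2 + a - b) + 1 turns its solutions
   bijectively into the representations x^2 + y^2 = 8 N + 1 with y = 1 mod 4.  A representation
   of an odd number has exactly one odd coordinate, and exactly one of its four rotations by
   multiples of a right angle puts that coordinate second and makes it 1 mod 4. *)

definition two_sq_reps :: "int \<Rightarrow> (int \<times> int) set" where
  "two_sq_reps n = {(x, y). x^2 + y^2 = n}"

lemma abs_le_square_int: "\<bar>x::int\<bar> \<le> x^2"
proof (cases "x = 0")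
  case False
  then have "\<bar>x\<bar>^1 \<le> \<bar>x\<bar>^2" by (intro power_increasing) auto
  then show ?thesis by simp
qed simp

lemma finite_two_sq_reps: "finite (two_sq_reps n)"
proof (rule finite_subset)
  show "two_sq_reps n \<subseteq> {-n..n} \<times> {-n..n}"
  proof safe
    fix x y assume "(x, y) \<in> two_sq_reps n"
    then have "x^2 + y^2 = n" by (simp add: two_sq_reps_def)
    moreover have "\<bar>x\<bar> \<le> x^2" "\<bar>y\<bar> \<le> y^2" "0 \<le> x^2" "0 \<le> y^2"
      by (simp_all add: abs_le_square_int)
    ultimately show "x \<in> {-n..n}" "y \<in> {-n..n}" by auto
  qed
qed simp

lemma card_Un_image_disjoint:
  assumes "finite B" "inj_on f B" "B \<inter> f ` B = {}"
  shows "card (B \<union> f ` B) = 2 * card B"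
  using card_Un_disjoint[OF assms(1) finite_imageI[OF assms(1)] assms(3)] card_image[OF assms(2)]
  by simp

lemma four_dvd_if_eight_dvd_square:
  fixes x :: int
  assumes "8 dvd x^2"
  shows "4 dvd x"
proof -
  have "even (x^2)" using assms by (rule dvd_trans[rotated]) simp
  then obtain k where k: "x = 2 * k" by auto
  with assms have "4 * 2 dvd 4 * k^2" by (simp add: power_mult_distrib)
  then have "2 dvd k^2" by (rule zdvd_mult_cancel) simp
  then have "even k" by simp
  with k show ?thesis by auto
qed

lemma card_two_sq_reps_odd:
  assumes "odd n"
  shows "card (two_sq_reps n) = 4 * card {p \<in> two_sq_reps n. snd p mod 4 = 1}"
proof -
  define odd_y where "odd_y = {p \<in> two_sq_reps n. odd (snd p)}"
  define T where "T = {p \<in> two_sq_reps n. snd p mod 4 = 1}"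
  define rot :: "int \<times> int \<Rightarrow> int \<times> int" where "rot = (\<lambda>(x, y). (-y, x))"
  define neg :: "int \<times> int \<Rightarrow> int \<times> int" where "neg = (\<lambda>(x, y). (-x, -y))"
  have parity: "odd x \<longleftrightarrow> even y" if "(x, y) \<in> two_sq_reps n" for x y
  proof -
    from that assms have "odd (x^2 + y^2)" by (simp add: two_sq_reps_def)
    then show ?thesis by auto
  qed
  have reps_split: "two_sq_reps n = odd_y \<union> rot ` odd_y"
  proof
    show "two_sq_reps n \<subseteq> odd_y \<union> rot ` odd_y"
    proof clarify
      fix x y assume xy: "(x, y) \<in> two_sq_reps n" "(x, y) \<notin> rot ` odd_y"
      have "(x, y) = rot (y, -x)" by (simp add: rot_def)
      moreover have "(y, -x) \<in> two_sq_reps n" using xy(1) by (simp add: two_sq_reps_def)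
      ultimately have "even x" using xy by (auto simp: odd_y_def)
      with xy(1) parity show "(x, y) \<in> odd_y" by (auto simp: odd_y_def)
    qed
    show "odd_y \<union> rot ` odd_y \<subseteq> two_sq_reps n"
      by (auto simp: odd_y_def rot_def two_sq_reps_def)
  qed
  have rot_disjoint: "odd_y \<inter> rot ` odd_y = {}"
    using parity by (auto simp: odd_y_def rot_def)
  have odd_y_split: "odd_y = T \<union> neg ` T"
  proof
    show "odd_y \<subseteq> T \<union> neg ` T"
    proof clarify
      fix x y assume xy: "(x, y) \<in> odd_y" "(x, y) \<notin> neg ` T"
      have "(x, y) = neg (-x, -y)" by (simp add: neg_def)
      with xy have "(-x, -y) \<notin> T" by blast
      with xy(1) show "(x, y) \<in> T" by (auto simp: odd_y_def T_def two_sq_reps_def) presburger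
    qed
    show "T \<union> neg ` T \<subseteq> odd_y"
      by (auto simp: odd_y_def T_def neg_def two_sq_reps_def) presburger+
  qed
  have neg_disjoint: "T \<inter> neg ` T = {}"
    by (auto simp: T_def neg_def) presburger
  have "finite odd_y" "finite T"
    using finite_two_sq_reps by (simp_all add: odd_y_def T_def)
  moreover have "inj_on rot odd_y" "inj_on neg T"
    by (auto simp: rot_def neg_def inj_on_def)
  ultimately have "card (odd_y \<union> rot ` odd_y) = 2 * card odd_y"
    and "card (T \<union> neg ` T) = 2 * card T"
    using rot_disjoint neg_disjoint by (simp_all add: card_Un_image_disjoint)
  then have "card (two_sq_reps n) = 2 * card odd_y" "card odd_y = 2 * card T"
    by (simp_all only: reps_split odd_y_split)
  then show ?thesis by (simp add: T_def)
qed

definition doubled_level_set :: "int \<Rightarrow> (int \<times> int) set" where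
  "doubled_level_set m = {(a, b). 2 * a^2 + 2 * b^2 + a - b = 2 * m}"

lemma bij_betw_doubled_level_set_two_sq_reps:
  "bij_betw (\<lambda>(a, b). (2 * (a + b), 2 * (a - b) + 1)) (doubled_level_set m)
     {p \<in> two_sq_reps (8 * m + 1). snd p mod 4 = 1}"
proof (rule bij_betw_imageI)
  show "inj_on (\<lambda>(a, b). (2 * (a + b), 2 * (a - b) + 1)) (doubled_level_set m)"
    by (auto simp: inj_on_def)
  have sum_sq: "(2 * (a + b))^2 + (2 * (a - b) + 1)^2 = 4 * (2 * a^2 + 2 * b^2 + a - b) + 1"
    for a b :: int
    by (simp add: power2_eq_square algebra_simps)
  show "(\<lambda>(a, b). (2 * (a + b), 2 * (a - b) + 1)) ` (doubled_level_set m)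
      = {p \<in> two_sq_reps (8 * m + 1). snd p mod 4 = 1}"
  proof safe
    fix a b assume "(a, b) \<in> doubled_level_set m"
    then have eq: "2 * a^2 + 2 * b^2 + a - b = 2 * m" by (simp add: doubled_level_set_def)
    then show "(2 * (a + b), 2 * (a - b) + 1) \<in> two_sq_reps (8 * m + 1)"
      using sum_sq by (simp add: two_sq_reps_def)
    from eq have "a - b = 2 * (m - a^2 - b^2)" by (simp add: right_diff_distrib)
    then obtain k where "a - b = 2 * k" by blast
    then show "snd (2 * (a + b), 2 * (a - b) + 1) mod 4 = 1" unfolding snd_conv by presburger
  next
    fix x y assume xy: "(x, y) \<in> two_sq_reps (8 * m + 1)" "snd (x, y) mod 4 = 1"
    obtain j where j: "y = 4 * j + 1"
      using xy(2) by (metis add.commute div_mult_mod_eq mult.commute snd_conv)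
    have "x^2 = 8 * (m - 2 * j^2 - j)"
      using xy(1) by (simp add: two_sq_reps_def j power2_eq_square algebra_simps)
    then have "4 dvd x" by (intro four_dvd_if_eight_dvd_square) simp
    then obtain l where l: "x = 4 * l" by blast
    have "(l + j, l - j) \<in> doubled_level_set m"
      using xy(1) by (simp add: doubled_level_set_def two_sq_reps_def j l power2_eq_square algebra_simps)
    moreover have "(x, y) = (2 * ((l + j) + (l - j)), 2 * ((l + j) - (l - j)) + 1)"
      by (simp add: j l)
    ultimately show "(x, y) \<in> (\<lambda>(a, b). (2 * (a + b), 2 * (a - b) + 1)) ` doubled_level_set m"
      by (auto intro!: image_eqI)
  qed
qed

lemma bij_betw_doubled_level_set_half_ints:
  "bij_betw (\<lambda>(a, b). (of_int a / 2, of_int b / 2)) (doubled_level_set m)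
     {(q1, q2). q1 \<in> half_ints \<and> q2 \<in> half_ints \<and> 4 * q1^2 + 4 * q2^2 + q1 - q2 = (of_int m :: rat)}"
proof (rule bij_betw_imageI)
  show "inj_on (\<lambda>(a, b). (of_int a / 2 :: rat, of_int b / 2 :: rat)) (doubled_level_set m)"
    by (auto simp: inj_on_def)
  have halved: "4 * (of_int a / 2)^2 + 4 * (of_int b / 2)^2 + of_int a / 2 - of_int b / 2 = (of_int m :: rat)
      \<longleftrightarrow> 2 * a^2 + 2 * b^2 + a - b = 2 * m" for a b :: int
  proof -
    have "4 * (of_int a / 2)^2 + 4 * (of_int b / 2)^2 + of_int a / 2 - of_int b / 2
        = (of_int (2 * a^2 + 2 * b^2 + a - b) :: rat) / 2"
      by (simp add: power2_eq_square field_simps)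
    also have "\<dots> = of_int m \<longleftrightarrow> (of_int (2 * a^2 + 2 * b^2 + a - b) :: rat) = of_int (2 * m)"
      by (simp add: divide_eq_eq mult.commute)
    finally show ?thesis by (simp only: of_int_eq_iff)
  qed
  show "(\<lambda>(a, b). (of_int a / 2, of_int b / 2)) ` (doubled_level_set m)
      = {(q1, q2). q1 \<in> half_ints \<and> q2 \<in> half_ints \<and> 4 * q1^2 + 4 * q2^2 + q1 - q2 = of_int m}"
  proof safe
    fix q1 q2 :: rat
    assume "q1 \<in> half_ints" "q2 \<in> half_ints" and eq: "4 * q1^2 + 4 * q2^2 + q1 - q2 = of_int m"
    then obtain a b where "2 * q1 = of_int a" "2 * q2 = of_int b"
      by (auto simp: half_ints_def elim!: Ints_cases)
    then have "q1 = of_int a / 2" "q2 = of_int b / 2" by simp_all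
    with eq halved show "(q1, q2) \<in> (\<lambda>(a, b). (of_int a / 2, of_int b / 2)) ` doubled_level_set m"
      by (auto simp: doubled_level_set_def intro!: image_eqI[where x = "(a, b)"])
  qed (use halved in \<open>auto simp: half_ints_def doubled_level_set_def\<close>)
qed

theorem corollary8p13:
  fixes N :: nat
  shows "4 * card {(q1, q2). (q1::rat) \<in> half_ints \<and> (q2::rat) \<in> half_ints \<and>
              4 * q1^2 + 4 * q2^2 + q1 - q2 = of_nat N}
         = card {(x, y). (x::int)^2 + (y::int)^2 = 8 * int N + 1}"
proof -
  have "card {(q1, q2). q1 \<in> half_ints \<and> q2 \<in> half_ints \<and> 4 * q1^2 + 4 * q2^2 + q1 - q2 = of_nat N}
      = card (doubled_level_set (int N))"
    using bij_betw_same_card[OF bij_betw_doubled_level_set_half_ints[of "int N"]] by simp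
  also have "\<dots> = card {p \<in> two_sq_reps (8 * int N + 1). snd p mod 4 = 1}"
    by (rule bij_betw_same_card[OF bij_betw_doubled_level_set_two_sq_reps])
  finally show ?thesis
    using card_two_sq_reps_odd[of "8 * int N + 1"] by (simp add: two_sq_reps_def)
qed

end
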